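(* Let $G=(V,E)$ be a finite simple connected graph, $b\in\mathbb{R}^V$ a nontrivial vector, and $S\subset V$ a $b$-boundable subset. Let $x_S$ be the local solution of $\mathcal{L}x=b$ satisfying the boundary condition $b$. Then $$x_S=\int_0^\infty \mathcal{H}_{S,t}\,b_1\,\mathrm{d}t,\qquad b_1=D_S^{-1/2}A_{S,\delta S}D_{\delta S}^{-1/2}b_{\delta S}.$$
   Context: $d_v$ is the degree of $v$, $D$ the diagonal degree matrix, $A$ the adjacency matrix, $\mathcal{L}=D^{-1/2}(D-A)D^{-1/2}$. For $S\subseteq V$, $M_S$ is the principal submatrix indexed by $S$; $\delta(S)=\{u\in V\setminus S: u\sim v\text{ for some }v\in S\}$; $A_{S,\delta S}$ is the submatrix of $A$ with rows $S$ and columns $\delta(S)$; $D_{\delta S}$, $b_{\delta S}$ are restrictions to $\delta(S)$. $S$ is $b$-boundable if (i) $S\subseteq V\setminus\mathrm{supp}(b)$, (ii) $\delta(S)\cap\mathrm{supp}(b)\neq\emptyset$, (iii) the induced subgraph on $S$ is connected and $\delta(S)\neq\emptyset$. The solution of $\mathcal{L}x=b$ satisfying the boundary condition $b$ is $x\in\mathbb{R}^V$ with $x(v)=\sum_{u\sim v}x(u)/\sqrt{d_vd_u}$ for $v\in S$ and $x(v)=b(v)$ for $v\notin S$; the local solution $x_S$ is its restriction to $S$. The Dirichlet heat kernel is $\mathcal{H}_{S,t}=e^{-t\mathcal{L}_S}$. *)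

theory Defs
  imports "HOL-Analysis.Analysis"
begin

definition simple_graph :: "'a set \<Rightarrow> ('a \<Rightarrow> 'a \<Rightarrow> bool) \<Rightarrow> bool" where
  "simple_graph V E \<longleftrightarrow> finite V \<and> (\<forall>u v. E u v \<longrightarrow> u \<in> V \<and> v \<in> V)
     \<and> (\<forall>u v. E u v \<longrightarrow> E v u) \<and> (\<forall>v. \<not> E v v)"

definition connected_on :: "('a \<Rightarrow> 'a \<Rightarrow> bool) \<Rightarrow> 'a set \<Rightarrow> bool" where
  "connected_on E S \<longleftrightarrow> S \<noteq> {} \<and>
     (\<forall>u\<in>S. \<forall>v\<in>S. (\<lambda>x y. x \<in> S \<and> y \<in> S \<and> E x y)\<^sup>*\<^sup>* u v)"

definition degree :: "'a set \<Rightarrow> ('a \<Rightarrow> 'a \<Rightarrow> bool) \<Rightarrow> 'a \<Rightarrow> nat" where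
  "degree V E v = card {u\<in>V. E v u}"

definition adj :: "('a \<Rightarrow> 'a \<Rightarrow> bool) \<Rightarrow> 'a \<Rightarrow> 'a \<Rightarrow> real" where
  "adj E u v = (if E u v then 1 else 0)"

definition norm_laplacian :: "'a set \<Rightarrow> ('a \<Rightarrow> 'a \<Rightarrow> bool) \<Rightarrow> 'a \<Rightarrow> 'a \<Rightarrow> real" where
  "norm_laplacian V E u v =
     inverse (sqrt (real (degree V E u))) *
     ((if u = v then real (degree V E u) else 0) - adj E u v) *
     inverse (sqrt (real (degree V E v)))"

definition vboundary :: "'a set \<Rightarrow> ('a \<Rightarrow> 'a \<Rightarrow> bool) \<Rightarrow> 'a set \<Rightarrow> 'a set" where
  "vboundary V E S = {u \<in> V - S. \<exists>v\<in>S. E u v}"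

definition supp :: "'a set \<Rightarrow> ('a \<Rightarrow> real) \<Rightarrow> 'a set" where
  "supp V b = {v\<in>V. b v \<noteq> 0}"

definition boundable :: "'a set \<Rightarrow> ('a \<Rightarrow> 'a \<Rightarrow> bool) \<Rightarrow> ('a \<Rightarrow> real) \<Rightarrow> 'a set \<Rightarrow> bool" where
  "boundable V E b S \<longleftrightarrow> S \<subseteq> V - supp V b
     \<and> vboundary V E S \<inter> supp V b \<noteq> {}
     \<and> connected_on E S \<and> vboundary V E S \<noteq> {}"

definition matmul :: "'a set \<Rightarrow> ('a \<Rightarrow> 'a \<Rightarrow> real) \<Rightarrow> ('a \<Rightarrow> 'a \<Rightarrow> real) \<Rightarrow> 'a \<Rightarrow> 'a \<Rightarrow> real" where
  "matmul S M N u v = (\<Sum>w\<in>S. M u w * N w v)"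

fun matpow :: "'a set \<Rightarrow> ('a \<Rightarrow> 'a \<Rightarrow> real) \<Rightarrow> nat \<Rightarrow> 'a \<Rightarrow> 'a \<Rightarrow> real" where
  "matpow S M 0 = (\<lambda>u v. if u = v then 1 else 0)"
| "matpow S M (Suc k) = matmul S M (matpow S M k)"

definition matexp :: "'a set \<Rightarrow> real \<Rightarrow> ('a \<Rightarrow> 'a \<Rightarrow> real) \<Rightarrow> 'a \<Rightarrow> 'a \<Rightarrow> real" where
  "matexp S c M u v = (\<Sum>k. c ^ k / fact k * matpow S M k u v)"

text \<open>Dirichlet heat kernel H_{S,t} = exp(-t L_S), L_S the principal submatrix on S.\<close>
definition dirichlet_heat_kernel :: "'a set \<Rightarrow> ('a \<Rightarrow> 'a \<Rightarrow> bool) \<Rightarrow> 'a set \<Rightarrow> real \<Rightarrow> 'a \<Rightarrow> 'a \<Rightarrow> real" where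
  "dirichlet_heat_kernel V E S t = matexp S (- t) (norm_laplacian V E)"

definition solves_boundary :: "'a set \<Rightarrow> ('a \<Rightarrow> 'a \<Rightarrow> bool) \<Rightarrow> ('a \<Rightarrow> real) \<Rightarrow> 'a set \<Rightarrow> ('a \<Rightarrow> real) \<Rightarrow> bool" where
  "solves_boundary V E b S x \<longleftrightarrow>
     (\<forall>v\<in>S. x v = (\<Sum>u\<in>{u\<in>V. E u v}. x u / sqrt (real (degree V E v) * real (degree V E u))))
     \<and> (\<forall>v\<in>V - S. x v = b v)"

definition b_one :: "'a set \<Rightarrow> ('a \<Rightarrow> 'a \<Rightarrow> bool) \<Rightarrow> ('a \<Rightarrow> real) \<Rightarrow> 'a set \<Rightarrow> 'a \<Rightarrow> real" where
  "b_one V E b S u = inverse (sqrt (real (degree V E u))) *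
     (\<Sum>w\<in>vboundary V E S. adj E u w * inverse (sqrt (real (degree V E w))) * b w)"

end

theory Submission
  imports Defs
begin

(* Let L be the normalized Laplacian restricted to S. Since x is harmonic on S with boundary
   values b, the vector b_1 equals L x_S. The quadratic form of L is a Dirichlet energy: squared
   differences of D^(-1/2) z along edges inside S, plus squares at the vertices adjacent to the
   boundary. Walking from a boundary edge through the connected set S bounds every coordinate by
   this energy, so <z, L z> >= lam |z|^2 for some lam > 0. Hence e^(-tL) y decays like e^(-lam t),
   and integrating d/dt e^(-tL) x_S = - e^(-tL) b_1 over [0, oo) yields x_S. *)

section \<open>Matrix exponential on a finite index set\<close>

lemma matpow_Suc_right:
  assumes "finite S" "u \<in> S" "w \<in> S"
  shows "matpow S M (Suc n) u w = (\<Sum>x\<in>S. matpow S M n u x * M x w)"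
  using assms(2)
proof (induction n arbitrary: u)
  case 0
  then show ?case using assms(1,3) by (simp add: matmul_def if_distrib if_distribR cong: if_cong)
next
  case (Suc n)
  have "matpow S M (Suc (Suc n)) u w = (\<Sum>x\<in>S. M u x * (\<Sum>y\<in>S. matpow S M n x y * M y w))"
    unfolding matpow.simps(2)[of S M "Suc n"] matmul_def
    by (intro sum.cong refl) (simp add: Suc.IH del: matpow.simps)
  also have "\<dots> = (\<Sum>y\<in>S. (\<Sum>x\<in>S. M u x * matpow S M n x y) * M y w)"
    unfolding sum_distrib_left sum_distrib_right mult.assoc by (rule sum.swap)
  also have "\<dots> = (\<Sum>y\<in>S. matpow S M (Suc n) u y * M y w)"
    by (simp add: matmul_def)
  finally show ?case .
qed

lemma matpow_abs_le:
  assumes "finite S" "\<And>u. u \<in> S \<Longrightarrow> (\<Sum>x\<in>S. \<bar>M u x\<bar>) \<le> K" "u \<in> S" "w \<in> S"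
  shows "\<bar>matpow S M n u w\<bar> \<le> K ^ n"
  using assms(3)
proof (induction n arbitrary: u)
  case 0
  have "0 \<le> K" using assms(2)[OF 0] by (meson order_trans sum_nonneg abs_ge_zero)
  then show ?case by simp
next
  case (Suc n)
  have "\<bar>matpow S M (Suc n) u w\<bar> \<le> (\<Sum>x\<in>S. \<bar>M u x\<bar> * K ^ n)"
    unfolding matpow.simps matmul_def
    by (rule order_trans[OF sum_abs sum_mono]) (auto simp: abs_mult Suc.IH intro!: mult_left_mono)
  also have "\<dots> \<le> K * K ^ n"
    unfolding sum_distrib_right[symmetric]
    using assms(2)[OF Suc.prems] Suc.IH[OF Suc.prems]
    by (intro mult_right_mono) (auto intro: order_trans[OF abs_ge_zero])
  finally show ?case by simp
qed

lemma matexp_eq_suminf: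
  "matexp S c M u w = (\<Sum>k. matpow S M k u w / fact k * c ^ k)"
  unfolding matexp_def by (simp add: mult.commute)

lemma summable_matexp:
  assumes "finite S" "u \<in> S" "w \<in> S"
  shows "summable (\<lambda>k. matpow S M k u w / fact k * c ^ k)"
proof -
  define K where "K = (\<Sum>u\<in>S. \<Sum>x\<in>S. \<bar>M u x\<bar>)"
  have row: "(\<Sum>x\<in>S. \<bar>M u x\<bar>) \<le> K" if "u \<in> S" for u
    unfolding K_def using assms(1) that
    by (intro member_le_sum[where f = "\<lambda>u. \<Sum>x\<in>S. \<bar>M u x\<bar>"] sum_nonneg) auto
  show ?thesis
  proof (rule summable_comparison_test'[OF summable_exp[of "K * \<bar>c\<bar>"]])
    fix k :: nat
    have "norm (matpow S M k u w / fact k * c ^ k) = \<bar>matpow S M k u w\<bar> * \<bar>c\<bar> ^ k / fact k"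
      by (simp add: abs_mult power_abs)
    also have "\<dots> \<le> K ^ k * \<bar>c\<bar> ^ k / fact k"
      using matpow_abs_le[OF assms(1) row assms(2,3)]
      by (intro divide_right_mono mult_right_mono) auto
    finally show "norm (matpow S M k u w / fact k * c ^ k) \<le> inverse (fact k) * (K * \<bar>c\<bar>) ^ k"
      by (simp add: power_mult_distrib field_simps)
  qed
qed

lemma matexp_zero:
  assumes "finite S" "u \<in> S" "w \<in> S"
  shows "matexp S 0 M u w = (if u = w then 1 else 0)"
  unfolding matexp_eq_suminf by (subst powser_zero) simp

lemma sums_matexp_mult_left:
  assumes "finite S" "w \<in> S"
  shows "(\<lambda>k. matpow S M (Suc k) u w / fact k * c ^ k) sums (\<Sum>x\<in>S. M u x * matexp S c M x w)"
proof -
  have "(\<lambda>k. \<Sum>x\<in>S. M u x * (matpow S M k x w / fact k * c ^ k)) sums (\<Sum>x\<in>S. M u x * matexp S c M x w)"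
    unfolding matexp_eq_suminf
    using assms by (intro sums_sum sums_mult summable_sums summable_matexp) auto
  moreover have "(\<Sum>x\<in>S. M u x * (matpow S M k x w / fact k * c ^ k)) = matpow S M (Suc k) u w / fact k * c ^ k" for k
    by (simp add: matmul_def sum_distrib_right sum_divide_distrib mult.assoc)
  ultimately show ?thesis by simp
qed

lemma sums_matexp_mult_right:
  assumes "finite S" "u \<in> S" "w \<in> S"
  shows "(\<lambda>k. matpow S M (Suc k) u w / fact k * c ^ k) sums (\<Sum>x\<in>S. matexp S c M u x * M x w)"
proof -
  have "(\<lambda>k. \<Sum>x\<in>S. matpow S M k u x / fact k * c ^ k * M x w) sums (\<Sum>x\<in>S. matexp S c M u x * M x w)"
    unfolding matexp_eq_suminf
    using assms by (intro sums_sum sums_mult2 summable_sums summable_matexp) auto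
  moreover have "(\<Sum>x\<in>S. matpow S M k u x / fact k * c ^ k * M x w) = matpow S M (Suc k) u w / fact k * c ^ k" for k
    unfolding matpow_Suc_right[OF assms]
    by (simp add: sum_distrib_left sum_distrib_right sum_divide_distrib mult_ac)
  ultimately show ?thesis by simp
qed

lemma matexp_commute:
  assumes "finite S" "u \<in> S" "w \<in> S"
  shows "(\<Sum>x\<in>S. M u x * matexp S c M x w) = (\<Sum>x\<in>S. matexp S c M u x * M x w)"
  by (rule sums_unique2[OF sums_matexp_mult_left[OF assms(1,3)] sums_matexp_mult_right[OF assms]])

lemma has_field_derivative_matexp:
  assumes "finite S" "u \<in> S" "w \<in> S"
  shows "((\<lambda>c. matexp S c M u w) has_field_derivative (\<Sum>x\<in>S. M u x * matexp S c M x w)) (at c)"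
proof -
  let ?a = "\<lambda>k. matpow S M k u w / fact k"
  have "((\<lambda>c. \<Sum>k. ?a k * c ^ k) has_field_derivative (\<Sum>k. diffs ?a k * c ^ k)) (at c)"
    using summable_matexp[OF assms] by (intro termdiffs_strong_converges_everywhere) simp
  moreover have "diffs ?a = (\<lambda>k. matpow S M (Suc k) u w / fact k)"
    by (simp add: diffs_def fun_eq_iff del: matpow.simps)
  moreover have "(\<lambda>c. matexp S c M u w) = (\<lambda>c. \<Sum>k. ?a k * c ^ k)"
    by (simp add: matexp_eq_suminf)
  ultimately show ?thesis
    using sums_unique[OF sums_matexp_mult_left[OF assms(1,3)]] by simp
qed

section \<open>Heat flow of a coercive matrix\<close>

definition heat_flow :: "'a set \<Rightarrow> ('a \<Rightarrow> 'a \<Rightarrow> real) \<Rightarrow> ('a \<Rightarrow> real) \<Rightarrow> real \<Rightarrow> 'a \<Rightarrow> real" where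
  "heat_flow S M y t u = (\<Sum>w\<in>S. matexp S (- t) M u w * y w)"

definition quad_form :: "'a set \<Rightarrow> ('a \<Rightarrow> 'a \<Rightarrow> real) \<Rightarrow> ('a \<Rightarrow> real) \<Rightarrow> real" where
  "quad_form S M z = (\<Sum>u\<in>S. \<Sum>w\<in>S. z u * M u w * z w)"

lemma heat_flow_zero:
  assumes "finite S" "u \<in> S"
  shows "heat_flow S M y 0 u = y u"
  using assms by (simp add: heat_flow_def matexp_zero if_distrib if_distribR cong: if_cong)

lemma heat_flow_matrix_commute:
  assumes "finite S" "u \<in> S"
  shows "heat_flow S M (\<lambda>x. \<Sum>w\<in>S. M x w * y w) t u = (\<Sum>x\<in>S. M u x * heat_flow S M y t x)"
proof -
  have "heat_flow S M (\<lambda>x. \<Sum>w\<in>S. M x w * y w) t u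
      = (\<Sum>w\<in>S. (\<Sum>x\<in>S. matexp S (- t) M u x * M x w) * y w)"
    unfolding heat_flow_def sum_distrib_left sum_distrib_right mult.assoc by (rule sum.swap)
  also have "\<dots> = (\<Sum>w\<in>S. (\<Sum>x\<in>S. M u x * matexp S (- t) M x w) * y w)"
    using assms by (simp add: matexp_commute)
  also have "\<dots> = (\<Sum>x\<in>S. M u x * heat_flow S M y t x)"
    unfolding heat_flow_def sum_distrib_left sum_distrib_right mult.assoc by (rule sum.swap)
  finally show ?thesis .
qed

lemma has_field_derivative_heat_flow:
  assumes "finite S" "u \<in> S"
  shows "((\<lambda>t. heat_flow S M y t u) has_field_derivative - (\<Sum>x\<in>S. M u x * heat_flow S M y t x)) (at t)"
proof -
  have "((\<lambda>t. matexp S (- t) M u w) has_field_derivative - (\<Sum>x\<in>S. M u x * matexp S (- t) M x w)) (at t)"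
    if "w \<in> S" for w
    using DERIV_chain2[OF has_field_derivative_matexp[OF assms that] DERIV_minus[OF DERIV_ident]]
    by simp
  then have "((\<lambda>t. heat_flow S M y t u) has_field_derivative
      (\<Sum>w\<in>S. - (\<Sum>x\<in>S. M u x * matexp S (- t) M x w) * y w)) (at t)"
    unfolding heat_flow_def by (intro DERIV_sum DERIV_cmult_right) auto
  also have "(\<Sum>w\<in>S. - (\<Sum>x\<in>S. M u x * matexp S (- t) M x w) * y w)
      = - (\<Sum>x\<in>S. M u x * heat_flow S M y t x)"
    unfolding heat_flow_def sum_distrib_left sum_distrib_right sum_negf mult.assoc mult_minus_left
    by (subst sum.swap) (rule refl)
  finally show ?thesis .
qed

lemma heat_flow_energy_decay:
  assumes "finite S" and coercive: "\<And>z. lam * (\<Sum>u\<in>S. (z u)\<^sup>2) \<le> quad_form S M z" and "0 \<le> t"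
  shows "(\<Sum>u\<in>S. (heat_flow S M y t u)\<^sup>2) \<le> exp (- 2 * lam * t) * (\<Sum>u\<in>S. (y u)\<^sup>2)"
proof -
  define g where "g t = (\<Sum>u\<in>S. (heat_flow S M y t u)\<^sup>2)" for t
  have g': "(g has_field_derivative - 2 * quad_form S M (heat_flow S M y s)) (at s)" for s
  proof -
    have "(g has_field_derivative
        (\<Sum>u\<in>S. 2 * heat_flow S M y s u * - (\<Sum>x\<in>S. M u x * heat_flow S M y s x))) (at s)"
      unfolding g_def using assms(1)
      by (intro DERIV_sum) (auto intro!: derivative_eq_intros has_field_derivative_heat_flow)
    then show ?thesis
      by (simp add: quad_form_def sum_distrib_left sum_negf mult_ac)
  qed
  let ?h = "\<lambda>t. exp (2 * lam * t) * g t"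
  have "?h t \<le> ?h 0"
  proof (rule DERIV_nonpos_imp_nonincreasing[OF \<open>0 \<le> t\<close>])
    fix s
    have "(?h has_field_derivative
        2 * exp (2 * lam * s) * (lam * g s - quad_form S M (heat_flow S M y s))) (at s)"
      by (rule derivative_eq_intros g' refl | simp add: algebra_simps)+
    moreover have "lam * g s \<le> quad_form S M (heat_flow S M y s)"
      unfolding g_def by (rule coercive)
    ultimately show "\<exists>D. (?h has_field_derivative D) (at s) \<and> D \<le> 0"
      by (intro exI conjI) (auto simp: mult_nonpos_nonneg mult_le_0_iff)
  qed
  moreover have "g 0 = (\<Sum>u\<in>S. (y u)\<^sup>2)"
    unfolding g_def using assms(1) by (simp add: heat_flow_zero)
  ultimately show ?thesis
    unfolding g_def by (simp add: exp_minus field_simps)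
qed

lemma heat_flow_decay:
  assumes "finite S" "\<And>z. lam * (\<Sum>u\<in>S. (z u)\<^sup>2) \<le> quad_form S M z" "u \<in> S" "0 \<le> t"
  shows "\<bar>heat_flow S M y t u\<bar> \<le> sqrt (\<Sum>u\<in>S. (y u)\<^sup>2) * exp (- lam * t)"
proof -
  have "(heat_flow S M y t u)\<^sup>2 \<le> (\<Sum>u\<in>S. (heat_flow S M y t u)\<^sup>2)"
    using assms(1,3) by (intro member_le_sum) auto
  also have "\<dots> \<le> exp (- 2 * lam * t) * (\<Sum>u\<in>S. (y u)\<^sup>2)"
    using heat_flow_energy_decay assms(1,2,4) by blast
  also have "\<dots> = (sqrt (\<Sum>u\<in>S. (y u)\<^sup>2) * exp (- lam * t))\<^sup>2"
    by (simp add: power_mult_distrib sum_nonneg flip: exp_of_nat_mult)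
  finally show ?thesis
    by (simp add: abs_le_square_iff[symmetric] sum_nonneg)
qed

lemma has_integral_to_inf_antiderivative:
  fixes F f :: "real \<Rightarrow> real"
  assumes "0 < lam"
    and deriv: "\<And>t. 0 \<le> t \<Longrightarrow> (F has_real_derivative f t) (at t)"
    and lim: "(F \<longlongrightarrow> 0) at_top"
    and bound: "\<And>t. 0 \<le> t \<Longrightarrow> \<bar>f t\<bar> \<le> C * exp (- lam * t)"
  shows "(f has_integral - F 0) {0..}"
proof -
  \<comment> \<open>Adding \<open>C * exp (- lam * t)\<close> makes the integrand nonnegative, so \<open>has_integral_to_inf\<close> applies.\<close>
  define h where "h t = f t + C * exp (- lam * t)" for t
  define G where "G t = F t - C * exp (- lam * t) / lam" for t
  have G_deriv: "(G has_real_derivative h t) (at t)" if "0 \<le> t" for t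
  proof -
    have "((\<lambda>t. exp (- lam * t)) has_real_derivative exp (- lam * t) * (- lam)) (at t)"
      by (auto intro!: derivative_eq_intros)
    from DERIV_diff[OF deriv[OF that] DERIV_cdivide[OF DERIV_cmult[OF this], of C lam]]
    show ?thesis
      unfolding G_def h_def using \<open>0 < lam\<close> by simp
  qed
  have h_integral: "(h has_integral G y - G 0) {0..y}" if "0 \<le> y" for y
    using that
    by (intro fundamental_theorem_of_calculus)
       (auto intro!: has_field_derivative_at_within G_deriv simp flip: has_real_derivative_iff_has_vector_derivative)
  have "(h has_integral - G 0) {0..}"
  proof (rule has_integral_to_inf)
    show "h integrable_on {0..y}" for y
      using h_integral by (cases "0 \<le> y") auto
    have "((\<lambda>t. C * exp (- lam * t) / lam) \<longlongrightarrow> 0) at_top"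
      using \<open>0 < lam\<close> by real_asymp
    then have "((\<lambda>y. G y - G 0) \<longlongrightarrow> 0 - 0 - G 0) at_top"
      unfolding G_def by (intro tendsto_diff lim tendsto_const)
    moreover have "\<forall>\<^sub>F y in at_top. G y - G 0 = integral {0..y} h"
      by (intro eventually_mono[OF eventually_ge_at_top[of 0]]) (simp add: integral_unique[OF h_integral])
    ultimately show "((\<lambda>y. integral {0..y} h) \<longlongrightarrow> - G 0) at_top"
      by (simp add: tendsto_cong)
    show "0 \<le> h t" if "0 \<le> t" for t
      using bound[OF that] unfolding h_def by linarith
  qed
  moreover have "((\<lambda>t. C * exp (- lam * t)) has_integral C / lam) {0..}"
    using has_integral_mult_right[OF has_integral_exp_minus_to_infinity[OF \<open>0 < lam\<close>, of 0]]
    by simp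
  ultimately have "((\<lambda>t. h t - C * exp (- lam * t)) has_integral - G 0 - C / lam) {0..}"
    by (rule has_integral_diff)
  then show ?thesis
    unfolding h_def G_def by simp
qed

lemma heat_flow_integral:
  assumes "finite S" "0 < lam" "\<And>z. lam * (\<Sum>u\<in>S. (z u)\<^sup>2) \<le> quad_form S M z" "v \<in> S"
  shows "((\<lambda>t. heat_flow S M (\<lambda>u. \<Sum>w\<in>S. M u w * x w) t v) has_integral x v) {0..}"
proof -
  let ?F = "\<lambda>t. - heat_flow S M x t v"
  have "(?F has_real_derivative heat_flow S M (\<lambda>u. \<Sum>w\<in>S. M u w * x w) t v) (at t)" for t
    using DERIV_minus[OF has_field_derivative_heat_flow[OF assms(1,4)]]
    by (simp add: heat_flow_matrix_commute[OF assms(1,4)])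
  moreover have "(?F \<longlongrightarrow> 0) at_top"
  proof (rule Lim_null_comparison)
    show "\<forall>\<^sub>F t in at_top. norm (?F t) \<le> sqrt (\<Sum>u\<in>S. (x u)\<^sup>2) * exp (- lam * t)"
      using heat_flow_decay[OF assms(1,3,4)]
      by (intro eventually_mono[OF eventually_ge_at_top[of 0]]) simp
    show "((\<lambda>t. sqrt (\<Sum>u\<in>S. (x u)\<^sup>2) * exp (- lam * t)) \<longlongrightarrow> 0) at_top"
      using \<open>0 < lam\<close> by (intro tendsto_mult_right_zero) real_asymp
  qed
  ultimately have "((\<lambda>t. heat_flow S M (\<lambda>u. \<Sum>w\<in>S. M u w * x w) t v) has_integral - ?F 0) {0..}"
    using heat_flow_decay[OF assms(1,3,4)] assms(2)
    by (intro has_integral_to_inf_antiderivative) auto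
  then show ?thesis
    using heat_flow_zero[OF assms(1,4)] by simp
qed

section \<open>The Dirichlet Laplacian of a graph domain\<close>

locale dirichlet_domain =
  fixes V :: "'a set" and E :: "'a \<Rightarrow> 'a \<Rightarrow> bool" and S :: "'a set"
  assumes graph: "simple_graph V E"
    and subset: "S \<subseteq> V"
    and connected: "connected_on E S"
    and boundary_edge: "\<exists>u\<in>S. \<exists>w\<in>V - S. E u w"
begin

abbreviation deg :: "'a \<Rightarrow> real" where "deg u \<equiv> real (degree V E u)"
abbreviation L :: "'a \<Rightarrow> 'a \<Rightarrow> real" where "L \<equiv> norm_laplacian V E"

definition scaled :: "('a \<Rightarrow> real) \<Rightarrow> 'a \<Rightarrow> real" where
  "scaled z u = z u / sqrt (deg u)"

lemma finite_V: "finite V"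
  using graph by (simp add: simple_graph_def)

lemma finite_S: "finite S"
  using finite_V subset by (rule finite_subset[rotated])

lemma edge_sym: "E u w \<Longrightarrow> E w u"
  using graph by (simp add: simple_graph_def)

lemma adj_sym: "adj E u w = adj E w u"
  using edge_sym by (auto simp: adj_def)

lemma adj_nonneg: "0 \<le> adj E u w"
  by (simp add: adj_def)

lemma degree_pos:
  assumes "u \<in> S"
  shows "0 < degree V E u"
proof -
  obtain w0 w1 where w: "w0 \<in> S" "w1 \<in> V - S" "E w0 w1"
    using boundary_edge by blast
  have "(\<lambda>x y. x \<in> S \<and> y \<in> S \<and> E x y)\<^sup>*\<^sup>* w0 u"
    using connected w(1) assms unfolding connected_on_def by blast
  then have "\<exists>w\<in>V. E u w"
    by (induction rule: rtranclp_induct) (use w subset edge_sym in auto)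
  then show ?thesis
    using finite_V by (auto simp: degree_def card_gt_0_iff)
qed

lemma degree_eq_sum_adj: "deg u = (\<Sum>w\<in>V. adj E u w)"
  using finite_V by (simp add: degree_def adj_def sum.If_cases Int_def)

lemma quad_form_laplacian:
  "quad_form S L z =
     (\<Sum>u\<in>S. \<Sum>w\<in>S. adj E u w * (scaled z u - scaled z w)\<^sup>2) / 2
     + (\<Sum>u\<in>S. \<Sum>w\<in>V - S. adj E u w * (scaled z u)\<^sup>2)"
proof -
  let ?y = "scaled z"
  have "z u * L u w * z w = ?y u * ((if u = w then deg u else 0) - adj E u w) * ?y w"
    if "u \<in> S" "w \<in> S" for u w
    using degree_pos[OF that(1)] degree_pos[OF that(2)]
    by (simp add: norm_laplacian_def scaled_def field_simps)
  then have "quad_form S L z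
      = (\<Sum>u\<in>S. \<Sum>w\<in>S. (if u = w then deg u * ?y u * ?y w else 0) - adj E u w * ?y u * ?y w)"
    unfolding quad_form_def by (intro sum.cong refl) (simp add: algebra_simps)
  also have "\<dots> = (\<Sum>u\<in>S. deg u * (?y u)\<^sup>2) - (\<Sum>u\<in>S. \<Sum>w\<in>S. adj E u w * ?y u * ?y w)"
    using finite_S by (simp add: sum_subtractf power2_eq_square mult.assoc)
  also have "(\<Sum>u\<in>S. deg u * (?y u)\<^sup>2)
      = (\<Sum>u\<in>S. \<Sum>w\<in>S. adj E u w * (?y u)\<^sup>2) + (\<Sum>u\<in>S. \<Sum>w\<in>V - S. adj E u w * (?y u)\<^sup>2)"
    unfolding degree_eq_sum_adj sum.subset_diff[OF subset finite_V]
    by (simp add: sum.distrib sum_distrib_right distrib_right add.commute)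
  finally have "quad_form S L z = (\<Sum>u\<in>S. \<Sum>w\<in>S. adj E u w * (?y u)\<^sup>2)
      - (\<Sum>u\<in>S. \<Sum>w\<in>S. adj E u w * ?y u * ?y w) + (\<Sum>u\<in>S. \<Sum>w\<in>V - S. adj E u w * (?y u)\<^sup>2)"
    by simp
  moreover have "(\<Sum>u\<in>S. \<Sum>w\<in>S. adj E u w * (?y w)\<^sup>2) = (\<Sum>u\<in>S. \<Sum>w\<in>S. adj E u w * (?y u)\<^sup>2)"
    by (subst sum.swap) (simp add: adj_sym)
  moreover have "(\<Sum>u\<in>S. \<Sum>w\<in>S. adj E u w * (?y u - ?y w)\<^sup>2)
      = (\<Sum>u\<in>S. \<Sum>w\<in>S. adj E u w * (?y u)\<^sup>2) - 2 * (\<Sum>u\<in>S. \<Sum>w\<in>S. adj E u w * ?y u * ?y w)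
        + (\<Sum>u\<in>S. \<Sum>w\<in>S. adj E u w * (?y w)\<^sup>2)"
    by (simp add: power2_diff algebra_simps sum.distrib sum_subtractf sum_distrib_left)
  ultimately show ?thesis
    by simp
qed

lemma quad_form_laplacian_nonneg: "0 \<le> quad_form S L z"
  unfolding quad_form_laplacian
  by (intro add_nonneg_nonneg divide_nonneg_nonneg sum_nonneg mult_nonneg_nonneg adj_nonneg) auto

lemma scaled_diff_sq_le_quad_form:
  assumes "u \<in> S" "w \<in> S" "E u w"
  shows "(scaled z u - scaled z w)\<^sup>2 \<le> 2 * quad_form S L z"
proof -
  let ?f = "\<lambda>u w. adj E u w * (scaled z u - scaled z w)\<^sup>2"
  have "?f u w \<le> (\<Sum>w\<in>S. ?f u w)"
    using assms finite_S by (intro member_le_sum) (auto simp: adj_nonneg)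
  also have "\<dots> \<le> (\<Sum>u\<in>S. \<Sum>w\<in>S. ?f u w)"
    using assms finite_S
    by (intro member_le_sum[where f = "\<lambda>u. \<Sum>w\<in>S. ?f u w"]) (auto simp: adj_nonneg intro!: sum_nonneg)
  moreover have "0 \<le> (\<Sum>u\<in>S. \<Sum>w\<in>V - S. adj E u w * (scaled z u)\<^sup>2)"
    by (intro sum_nonneg mult_nonneg_nonneg adj_nonneg) auto
  ultimately show ?thesis
    using assms unfolding quad_form_laplacian by (simp add: adj_def)
qed

lemma scaled_sq_le_quad_form:
  assumes "u \<in> S" "w \<in> V - S" "E u w"
  shows "(scaled z u)\<^sup>2 \<le> quad_form S L z"
proof -
  let ?f = "\<lambda>u w. adj E u w * (scaled z u)\<^sup>2"
  have "?f u w \<le> (\<Sum>w\<in>V - S. ?f u w)"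
    using assms finite_V by (intro member_le_sum) (auto simp: adj_nonneg)
  also have "\<dots> \<le> (\<Sum>u\<in>S. \<Sum>w\<in>V - S. ?f u w)"
    using assms finite_S
    by (intro member_le_sum[where f = "\<lambda>u. \<Sum>w\<in>V - S. ?f u w"]) (auto simp: adj_nonneg intro!: sum_nonneg)
  moreover have "0 \<le> (\<Sum>u\<in>S. \<Sum>w\<in>S. adj E u w * (scaled z u - scaled z w)\<^sup>2)"
    by (intro sum_nonneg mult_nonneg_nonneg adj_nonneg) auto
  ultimately show ?thesis
    using assms unfolding quad_form_laplacian by (simp add: adj_def)
qed

lemma scaled_sq_le_quad_form_reachable:
  assumes "w0 \<in> S" "w1 \<in> V - S" "E w0 w1"
    and "(\<lambda>x y. x \<in> S \<and> y \<in> S \<and> E x y)\<^sup>*\<^sup>* w0 u"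
  shows "\<exists>c. \<forall>z. (scaled z u)\<^sup>2 \<le> c * quad_form S L z"
  using assms(4)
proof (induction rule: rtranclp_induct)
  case base
  show ?case
    using scaled_sq_le_quad_form[OF assms(1-3)] by (intro exI[of _ 1]) simp
next
  case (step a u)
  then obtain c where c: "\<And>z. (scaled z a)\<^sup>2 \<le> c * quad_form S L z"
    by blast
  have "(scaled z u)\<^sup>2 \<le> (2 * c + 4) * quad_form S L z" for z
  proof -
    have "(scaled z u)\<^sup>2 \<le> 2 * (scaled z a)\<^sup>2 + 2 * (scaled z a - scaled z u)\<^sup>2"
      using sum_power2_ge_zero[of "2 * scaled z a - scaled z u" 0]
      by (simp add: power2_eq_square algebra_simps)
    also have "\<dots> \<le> 2 * (c * quad_form S L z) + 2 * (2 * quad_form S L z)"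
      using c[of z] scaled_diff_sq_le_quad_form[of a u z] step by auto
    finally show ?thesis
      by (simp add: algebra_simps)
  qed
  then show ?case
    by blast
qed

lemma quad_form_laplacian_coercive:
  "\<exists>lam > 0. \<forall>z. lam * (\<Sum>u\<in>S. (z u)\<^sup>2) \<le> quad_form S L z"
proof -
  obtain w0 w1 where w: "w0 \<in> S" "w1 \<in> V - S" "E w0 w1"
    using boundary_edge by blast
  have "\<forall>u\<in>S. \<exists>c. \<forall>z. (scaled z u)\<^sup>2 \<le> c * quad_form S L z"
    using scaled_sq_le_quad_form_reachable[OF w] connected w(1) unfolding connected_on_def by blast
  then obtain c where c: "\<And>u z. u \<in> S \<Longrightarrow> (scaled z u)\<^sup>2 \<le> c u * quad_form S L z"
    by metis
  define C where "C = (\<Sum>u\<in>S. deg u * \<bar>c u\<bar>)"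
  have "0 \<le> C"
    unfolding C_def by (intro sum_nonneg) auto
  have "(\<Sum>u\<in>S. (z u)\<^sup>2) \<le> (C + 1) * quad_form S L z" for z
  proof -
    have "(\<Sum>u\<in>S. (z u)\<^sup>2) = (\<Sum>u\<in>S. deg u * (scaled z u)\<^sup>2)"
      using degree_pos by (intro sum.cong) (auto simp: scaled_def power_divide)
    also have "\<dots> \<le> (\<Sum>u\<in>S. deg u * (\<bar>c u\<bar> * quad_form S L z))"
      using quad_form_laplacian_nonneg[of z]
      by (intro sum_mono mult_left_mono order_trans[OF c mult_right_mono]) auto
    also have "\<dots> = C * quad_form S L z"
      by (simp add: C_def sum_distrib_left sum_distrib_right mult_ac)
    also have "\<dots> \<le> (C + 1) * quad_form S L z"
      using quad_form_laplacian_nonneg[of z] by (simp add: distrib_right)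
    finally show ?thesis .
  qed
  then have "\<forall>z. 1 / (C + 1) * (\<Sum>u\<in>S. (z u)\<^sup>2) \<le> quad_form S L z"
    using \<open>0 \<le> C\<close> by (simp add: field_simps)
  then show ?thesis
    using \<open>0 \<le> C\<close> by (intro exI[of _ "1 / (C + 1)"]) simp
qed

lemma b_one_eq_laplacian:
  assumes "solves_boundary V E b S x" "u \<in> S"
  shows "b_one V E b S u = (\<Sum>w\<in>S. L u w * x w)"
proof -
  define c where "c w = inverse (sqrt (deg u)) * inverse (sqrt (deg w))" for w
  have "x u = (\<Sum>w\<in>V. adj E u w * c w * x w)"
  proof -
    have "x u = (\<Sum>w\<in>{w\<in>V. E w u}. x w / sqrt (deg u * deg w))"
      using assms unfolding solves_boundary_def by blast
    also have "\<dots> = (\<Sum>w\<in>V. if E w u then x w / sqrt (deg u * deg w) else 0)"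
      by (rule sum.inter_filter[OF finite_V])
    also have "\<dots> = (\<Sum>w\<in>V. adj E u w * c w * x w)"
      using edge_sym[of u] edge_sym[of _ u]
      by (intro sum.cong refl) (auto simp: adj_def c_def real_sqrt_mult divide_inverse inverse_mult_distrib)
    finally show ?thesis .
  qed
  also have "\<dots> = (\<Sum>w\<in>V - S. adj E u w * c w * x w) + (\<Sum>w\<in>S. adj E u w * c w * x w)"
    by (rule sum.subset_diff[OF subset finite_V])
  also have "(\<Sum>w\<in>V - S. adj E u w * c w * x w) = b_one V E b S u"
  proof -
    have "(\<Sum>w\<in>V - S. adj E u w * c w * x w) = (\<Sum>w\<in>V - S. adj E u w * c w * b w)"
      using assms(1) unfolding solves_boundary_def by (intro sum.cong) auto
    also have "\<dots> = (\<Sum>w\<in>vboundary V E S. adj E u w * c w * b w)"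
      using finite_V assms(2) edge_sym
      by (intro sum.mono_neutral_right) (auto simp: vboundary_def adj_def)
    finally show ?thesis
      unfolding b_one_def c_def by (simp add: sum_distrib_left mult_ac)
  qed
  moreover have L_row: "L u w = (if u = w then 1 else 0) - adj E u w * c w" for w
    using degree_pos[OF assms(2)] by (auto simp: norm_laplacian_def c_def field_simps adj_def)
  have "(\<Sum>w\<in>S. L u w * x w) = (\<Sum>w\<in>S. (if u = w then x w else 0) - adj E u w * c w * x w)"
    unfolding L_row by (intro sum.cong refl) (simp add: left_diff_distrib)
  then have "(\<Sum>w\<in>S. L u w * x w) = x u - (\<Sum>w\<in>S. adj E u w * c w * x w)"
    using finite_S assms(2) by (simp add: sum_subtractf)
  ultimately show ?thesis
    by simp
qed

end

theorem corollary1: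
  fixes V :: "'a set" and E :: "'a \<Rightarrow> 'a \<Rightarrow> bool" and b :: "'a \<Rightarrow> real"
    and S :: "'a set" and x :: "'a \<Rightarrow> real"
  assumes "simple_graph V E"
    and "connected_on E V"
    and "\<exists>v\<in>V. b v \<noteq> 0"
    and "S \<subset> V"
    and "boundable V E b S"
    and "solves_boundary V E b S x"
  shows "\<forall>v\<in>S. ((\<lambda>t. \<Sum>u\<in>S. dirichlet_heat_kernel V E S t v u * b_one V E b S u)
                   has_integral x v) {0..}"
proof -
  have "dirichlet_domain V E S"
  proof
    show "simple_graph V E" "S \<subseteq> V" "connected_on E S"
      using assms(1,4,5) by (auto simp: boundable_def)
    obtain w u where "w \<in> V - S" "u \<in> S" "E w u"
      using assms(5) by (auto simp: boundable_def vboundary_def)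
    then show "\<exists>u\<in>S. \<exists>w\<in>V - S. E u w"
      using assms(1) unfolding simple_graph_def by blast
  qed
  then interpret dirichlet_domain V E S .
  obtain lam where lam: "0 < lam" "\<And>z. lam * (\<Sum>u\<in>S. (z u)\<^sup>2) \<le> quad_form S L z"
    using quad_form_laplacian_coercive by blast
  show ?thesis
  proof
    fix v assume "v \<in> S"
    have "heat_flow S L (\<lambda>u. \<Sum>w\<in>S. L u w * x w) t v
        = (\<Sum>u\<in>S. dirichlet_heat_kernel V E S t v u * b_one V E b S u)" for t
      using b_one_eq_laplacian[OF assms(6)]
      by (simp add: heat_flow_def dirichlet_heat_kernel_def)
    then show "((\<lambda>t. \<Sum>u\<in>S. dirichlet_heat_kernel V E S t v u * b_one V E b S u) has_integral x v) {0..}"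
      using heat_flow_integral[OF finite_S lam \<open>v \<in> S\<close>, of x] by simp
  qed
qed

end
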